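(* Let $\{\mu_\theta\}_{\theta\in\Theta}$ be a family of Gibbs measures satisfying the uniform Gibbs property with constant $N$ and constants $\mathcal{P}_\theta$, for potentials $\phi_\theta$, and let $L$ satisfy the Loss Assumption. Then for every $\epsilon>0$ there exists $T>0$ such that for all $\theta,\theta'\in\Theta$, $y\in\mathcal{Y}$ and integers $t\ge1$, $$\frac{\int_{\mathcal{X}}\exp(-L^t_\theta(x,y))\,d\mu_\theta(x)}{\int_{\mathcal{X}}\exp(-L^t_{\theta'}(x',y))\,d\mu_{\theta'}(x')}\le N^2\exp\Big(t\big(\omega(d_\Theta(\theta,\theta'))+\epsilon\big)+(t+T)\big(|\mathcal{P}_\theta-\mathcal{P}_{\theta'}|+\|\phi_\theta-\phi_{\theta'}\|\big)\Big),$$ where $\|\cdot\|$ is the sup norm.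
   Context: Discrete time $\mathbb{T}=\mathbb{N}$. $\mathcal{S}$ is a finite alphabet, $\mathcal{X}=\mathcal{S}^{\mathbb{N}}$ with the product topology and metric $d_{\mathcal{X}}(x,x')=2^{-n(x,x')}$, $n(x,x')=\inf\{m:x_m\ne x'_m\}$; $(\Phi x)_s=x_{s+1}$; $\mathcal{F}_r=\sigma(x_0,\dots,x_r)$. $\mathcal{Y}$ is Polish with a measurable map $\Psi$ (iterates $\Psi^t$). $\Theta$ is a compact metric space with metric $d_\Theta$. $\phi^t=\sum_{s=0}^{t-1}\phi\circ\Phi^s$. Uniform Gibbs property: each $\mu_\theta$ is a $\Phi$-invariant Borel probability on $\mathcal{X}$, $\phi_\theta:\mathcal{X}\to\mathbb{R}$ is Hölder continuous, and there are $N>0$ and $\mathcal{P}_\theta\in\mathbb{R}$ with $N^{-1}\le\mu_\theta(\{\bar x:\bar x_i=x_i,0\le i\le t-1\})/\exp(-\mathcal{P}_\theta t+\phi_\theta^t(x))\le N$ for all $\theta$, $x$, $t\ge1$. Loss Assumption: $L:\Theta\times\mathcal{X}\times\mathcal{Y}\to\mathbb{R}$ with (1) for each $\theta$, $L_\theta$ is bounded continuous on $\mathcal{X}\times\mathcal{Y}$ and depends on $x$ only through $(x_0,\dots,x_r)$ for some $r$; (2) $|L_\theta(x,y)-L_{\theta'}(x',y)|\le\omega(d_\Theta(\theta,\theta'))+\omega(d_{\mathcal{X}}(x,x'))$ for some $\omega:[0,\infty)\to[0,\infty)$ with $\omega(0)=\lim_{r\to0^+}\omega(r)=0$. $L^t_\theta(x,y)=\sum_{s=0}^{t-1}L_\theta(\Phi^sx,\Psi^sy)$.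 *)

theory Defs
  imports "HOL-Probability.Probability"
begin

text \<open>Symbolic sequence space X = S^N, with S a finite alphabet (finite type 'a).\<close>

definition first_diff :: "(nat \<Rightarrow> 'a) \<Rightarrow> (nat \<Rightarrow> 'a) \<Rightarrow> nat" where
  "first_diff x x' = (LEAST m. x m \<noteq> x' m)"

text \<open>d_X(x,x') = 2^(-n(x,x')), with n = inf of an empty set = infinity when x = x'.\<close>
definition dX :: "(nat \<Rightarrow> 'a) \<Rightarrow> (nat \<Rightarrow> 'a) \<Rightarrow> real" where
  "dX x x' = (if x = x' then 0 else (1/2) ^ first_diff x x')"

definition shift :: "(nat \<Rightarrow> 'a) \<Rightarrow> (nat \<Rightarrow> 'a)" where
  "shift x = (\<lambda>s. x (Suc s))"

definition birk :: "((nat \<Rightarrow> 'a) \<Rightarrow> real) \<Rightarrow> nat \<Rightarrow> (nat \<Rightarrow> 'a) \<Rightarrow> real" where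
  "birk f t x = (\<Sum>s<t. f ((shift ^^ s) x))"

definition loss_sum ::
  "('c \<Rightarrow> (nat \<Rightarrow> 'a) \<Rightarrow> 'b \<Rightarrow> real) \<Rightarrow> ('b \<Rightarrow> 'b) \<Rightarrow> 'c \<Rightarrow> nat \<Rightarrow> (nat \<Rightarrow> 'a) \<Rightarrow> 'b \<Rightarrow> real" where
  "loss_sum L \<Psi> \<theta> t x y = (\<Sum>s<t. L \<theta> ((shift ^^ s) x) ((\<Psi> ^^ s) y))"

definition cyl :: "(nat \<Rightarrow> 'a) \<Rightarrow> nat \<Rightarrow> (nat \<Rightarrow> 'a) set" where
  "cyl x t = {x'. \<forall>i<t. x' i = x i}"

text \<open>Borel sigma-algebra of the product topology on S^N (S finite, discrete):
  the product sigma-algebra, generated by the cylinders.\<close>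
definition Xspace :: "(nat \<Rightarrow> 'a) measure" where
  "Xspace = Pi\<^sub>M UNIV (\<lambda>_. count_space UNIV)"

definition holder :: "((nat \<Rightarrow> 'a) \<Rightarrow> real) \<Rightarrow> bool" where
  "holder f \<longleftrightarrow> (\<exists>C \<alpha>. \<alpha> > 0 \<and> (\<forall>x x'. \<bar>f x - f x'\<bar> \<le> C * dX x x' powr \<alpha>))"

definition uniform_gibbs ::
  "'c set \<Rightarrow> ('c \<Rightarrow> (nat \<Rightarrow> 'a) measure) \<Rightarrow> ('c \<Rightarrow> (nat \<Rightarrow> 'a) \<Rightarrow> real) \<Rightarrow> real \<Rightarrow> ('c \<Rightarrow> real) \<Rightarrow> bool" where
  "uniform_gibbs \<Theta> \<mu> \<phi> N P \<longleftrightarrow> N > 0 \<and>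
     (\<forall>\<theta>\<in>\<Theta>. prob_space (\<mu> \<theta>) \<and> sets (\<mu> \<theta>) = sets Xspace
        \<and> shift \<in> measurable (\<mu> \<theta>) (\<mu> \<theta>) \<and> distr (\<mu> \<theta>) (\<mu> \<theta>) shift = \<mu> \<theta>
        \<and> holder (\<phi> \<theta>)
        \<and> (\<forall>x. \<forall>t\<ge>1.
             1 / N \<le> measure (\<mu> \<theta>) (cyl x t) / exp (- P \<theta> * real t + birk (\<phi> \<theta>) t x)
           \<and> measure (\<mu> \<theta>) (cyl x t) / exp (- P \<theta> * real t + birk (\<phi> \<theta>) t x) \<le> N))"

definition loss_assumption ::
  "('c::metric_space) set \<Rightarrow> ('c \<Rightarrow> (nat \<Rightarrow> 'a) \<Rightarrow> ('b::metric_space) \<Rightarrow> real) \<Rightarrow> (real \<Rightarrow> real) \<Rightarrow> bool" where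
  "loss_assumption \<Theta> L \<omega> \<longleftrightarrow>
     (\<forall>\<theta>\<in>\<Theta>.
        (\<exists>B. \<forall>x y. \<bar>L \<theta> x y\<bar> \<le> B)
      \<and> (\<forall>x y. \<forall>\<epsilon>>0. \<exists>\<delta>>0. \<forall>x' y'. dX x x' < \<delta> \<and> dist y y' < \<delta> \<longrightarrow>
             \<bar>L \<theta> x' y' - L \<theta> x y\<bar> < \<epsilon>)
      \<and> (\<exists>r. \<forall>x x' y. (\<forall>i\<le>r. x i = x' i) \<longrightarrow> L \<theta> x y = L \<theta> x' y))
   \<and> (\<forall>r\<ge>0. \<omega> r \<ge> 0) \<and> \<omega> 0 = 0 \<and> (\<omega> \<longlongrightarrow> 0) (at_right 0)
   \<and> (\<forall>\<theta>\<in>\<Theta>. \<forall>\<theta>'\<in>\<Theta>. \<forall>x x' y.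
        \<bar>L \<theta> x y - L \<theta>' x' y\<bar> \<le> \<omega> (dist \<theta> \<theta>') + \<omega> (dX x x'))"

end

theory Submission
  imports Defs
begin

(*
  The loss L\<^sub>\<theta> depends on finitely many coordinates of x, but how many may vary with \<theta>.
  The modulus \<omega> gives a uniform substitute: replacing x by its prefix of length m changes
  L\<^sub>\<theta> by at most \<epsilon>/2 for all \<theta> at once, with m depending only on \<epsilon>. The truncated
  loss sums then depend only on the first t + m coordinates, so their integrals are finite
  sums over cylinders of length t + m. Passing from \<theta> to \<theta>' changes each truncated sum by
  at most t \<omega>(d(\<theta>,\<theta>')), and by the Gibbs bounds each cylinder measure by at most a factor
  N\<^sup>2 exp((t + m)(|P\<^sub>\<theta> - P\<^sub>\<theta>'| + \<parallel>\<phi>\<^sub>\<theta> - \<phi>\<^sub>\<theta>'\<parallel>)). Undoing the truncation on both sides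
  costs exp(t \<epsilon>/2) twice, and T = m.
*)

lemma abs_sum_diff_le:
  fixes a b :: "nat \<Rightarrow> real"
  assumes "\<And>s. s < t \<Longrightarrow> \<bar>a s - b s\<bar> \<le> c"
  shows "\<bar>(\<Sum>s<t. a s) - (\<Sum>s<t. b s)\<bar> \<le> real t * c"
proof -
  have "\<bar>(\<Sum>s<t. a s) - (\<Sum>s<t. b s)\<bar> \<le> (\<Sum>s<t. \<bar>a s - b s\<bar>)"
    by (simp add: sum_subtractf[symmetric] sum_abs)
  also have "\<dots> \<le> (\<Sum>s<t. c)"
    using assms by (intro sum_mono) auto
  finally show ?thesis
    by simp
qed

lemma exp_minus_le_of_abs_diff_le:
  fixes u v c :: real
  assumes "\<bar>u - v\<bar> \<le> c"
  shows "exp (- u) \<le> exp c * exp (- v)"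
  using assms by (simp add: exp_add[symmetric])

lemma integral_exp_minus_le:
  fixes u v :: "'x \<Rightarrow> real"
  assumes "integrable M (\<lambda>x. exp (- v x))" "\<And>x. \<bar>u x - v x\<bar> \<le> c"
  shows "(\<integral>x. exp (- u x) \<partial>M) \<le> exp c * (\<integral>x. exp (- v x) \<partial>M)"
proof -
  have "(\<integral>x. exp (- u x) \<partial>M) \<le> (\<integral>x. exp c * exp (- v x) \<partial>M)"
    using assms by (intro integral_mono' exp_minus_le_of_abs_diff_le) auto
  then show ?thesis
    by simp
qed

lemma divide_le_of_le_mult:
  fixes a b c :: real
  assumes "a \<le> c * b" "0 \<le> b" "0 \<le> c"
  shows "a / b \<le> c"
  using assms by (cases "b = 0") (simp_all add: divide_le_eq)

lemma funpow_shift_apply: "(shift ^^ s) x i = x (s + i)"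
  by (induction s arbitrary: x i) (auto simp: shift_def funpow_Suc_right)

lemma cyl_in_sets_Xspace: "cyl w n \<in> sets Xspace"
proof -
  have "cyl w n = {x \<in> space Xspace. \<forall>i<n. x i = w i}"
    by (auto simp: cyl_def Xspace_def space_PiM)
  also have "\<dots> \<in> sets Xspace"
    unfolding Xspace_def by measurable
  finally show ?thesis .
qed

lemma cylinder_function_integral:
  fixes f :: "(nat \<Rightarrow> 'a::finite) \<Rightarrow> real"
  assumes "finite_measure M" "sets M = sets Xspace"
    and depends: "\<And>x x'. (\<forall>i<n. x i = x' i) \<Longrightarrow> f x = f x'"
  shows "integrable M f"
    and "integral\<^sup>L M f = (\<Sum>w\<in>{..<n} \<rightarrow>\<^sub>E UNIV. f w * measure M (cyl w n))"
proof -
  interpret finite_measure M by fact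
  let ?W = "{..<n} \<rightarrow>\<^sub>E (UNIV :: 'a set)"
  have cyl_sets: "cyl w n \<in> sets M" for w
    using cyl_in_sets_Xspace assms(2) by simp
  have indicator_integrable: "integrable M (indicator (cyl w n) :: _ \<Rightarrow> real)" for w
    using cyl_sets by (intro integrable_real_indicator) (auto simp: less_top[symmetric])
  then have cyl_integrable: "integrable M (\<lambda>x. f w * indicator (cyl w n) x)" for w
    by (rule integrable_mult_right)
  have "f x = (\<Sum>w\<in>?W. f w * indicator (cyl w n) x)" for x
  proof -
    have "x \<in> cyl w n \<longleftrightarrow> w = restrict x {..<n}" if "w \<in> ?W" for w
      using that by (auto simp: cyl_def fun_eq_iff PiE_def extensional_def)
    then have "(\<Sum>w\<in>?W. f w * indicator (cyl w n) x)
        = (\<Sum>w\<in>?W. if w = restrict x {..<n} then f (restrict x {..<n}) else 0)"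
      by (intro sum.cong) (auto simp: indicator_def)
    also have "\<dots> = f (restrict x {..<n})"
      by (simp add: finite_PiE)
    also have "\<dots> = f x"
      by (rule depends) auto
    finally show ?thesis
      by simp
  qed
  then have f_eq: "f = (\<lambda>x. \<Sum>w\<in>?W. f w * indicator (cyl w n) x)"
    by (rule ext)
  show "integrable M f"
    by (subst f_eq) (intro Bochner_Integration.integrable_sum cyl_integrable)
  show "integral\<^sup>L M f = (\<Sum>w\<in>?W. f w * measure M (cyl w n))"
    by (subst f_eq, subst Bochner_Integration.integral_sum) (simp_all add: cyl_integrable indicator_integrable cyl_sets)
qed

lemma cylinder_function_integral_le:
  fixes f g :: "(nat \<Rightarrow> 'a::finite) \<Rightarrow> real"
  assumes "finite_measure M" "sets M = sets Xspace"
    and "finite_measure M'" "sets M' = sets Xspace"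
    and "\<And>x x'. (\<forall>i<n. x i = x' i) \<Longrightarrow> f x = f x'"
    and "\<And>x x'. (\<forall>i<n. x i = x' i) \<Longrightarrow> g x = g x'"
    and "\<And>x. 0 \<le> f x" "\<And>x. f x \<le> a * g x"
    and "\<And>w. measure M (cyl w n) \<le> b * measure M' (cyl w n)"
  shows "integral\<^sup>L M f \<le> a * b * integral\<^sup>L M' g"
proof -
  let ?W = "{..<n} \<rightarrow>\<^sub>E (UNIV :: 'a set)"
  have "integral\<^sup>L M f = (\<Sum>w\<in>?W. f w * measure M (cyl w n))"
    using assms by (intro cylinder_function_integral)
  also have "\<dots> \<le> (\<Sum>w\<in>?W. (a * g w) * (b * measure M' (cyl w n)))"
    using assms(7-9) order_trans[OF assms(7,8)] by (intro sum_mono mult_mono) auto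
  also have "\<dots> = a * b * (\<Sum>w\<in>?W. g w * measure M' (cyl w n))"
    by (simp add: sum_distrib_left algebra_simps)
  also have "(\<Sum>w\<in>?W. g w * measure M' (cyl w n)) = integral\<^sup>L M' g"
    using assms by (intro cylinder_function_integral(2)[symmetric])
  finally show ?thesis .
qed

lemma holder_bounded:
  assumes "holder f"
  obtains B where "\<And>x. \<bar>f x\<bar> \<le> B"
proof -
  obtain C \<alpha> where "\<alpha> > 0" and C: "\<And>x x'. \<bar>f x - f x'\<bar> \<le> C * dX x x' powr \<alpha>"
    using assms unfolding holder_def by blast
  fix x0
  have "\<bar>f x\<bar> \<le> \<bar>f x0\<bar> + \<bar>C\<bar>" for x
  proof -
    have d: "0 \<le> dX x x0 powr \<alpha>" "dX x x0 powr \<alpha> \<le> 1"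
      using \<open>\<alpha> > 0\<close> by (auto simp: dX_def power_le_one intro: powr_le1)
    have "C * dX x x0 powr \<alpha> \<le> \<bar>C\<bar> * dX x x0 powr \<alpha>"
      using d by (intro mult_right_mono) auto
    also have "\<dots> \<le> \<bar>C\<bar>"
      using d by (intro mult_left_le) auto
    finally show ?thesis
      using C[of x x0] by linarith
  qed
  then show thesis
    by (rule that)
qed

lemma holder_abs_diff_le_SUP:
  fixes f g :: "(nat \<Rightarrow> 'a) \<Rightarrow> real"
  assumes "holder f" "holder g"
  shows "\<bar>f x - g x\<bar> \<le> (SUP x. \<bar>f x - g x\<bar>)"
proof (rule cSUP_upper)
  obtain B1 B2 where "\<And>x. \<bar>f x\<bar> \<le> B1" "\<And>x. \<bar>g x\<bar> \<le> B2"
    using holder_bounded assms by metis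
  then show "bdd_above (range (\<lambda>x. \<bar>f x - g x\<bar>))"
    by (intro bdd_aboveI2[where M = "B1 + B2"]) (smt (verit))
qed simp

lemma uniform_gibbs_cyl_measure_le:
  assumes gibbs: "uniform_gibbs \<Theta> \<mu> \<phi> N P" and "\<theta> \<in> \<Theta>" "\<theta>' \<in> \<Theta>" "n \<ge> 1"
  shows "measure (\<mu> \<theta>) (cyl w n)
    \<le> N\<^sup>2 * exp (real n * (\<bar>P \<theta> - P \<theta>'\<bar> + (SUP x. \<bar>\<phi> \<theta> x - \<phi> \<theta>' x\<bar>))) * measure (\<mu> \<theta>') (cyl w n)"
proof -
  define K where "K = \<bar>P \<theta> - P \<theta>'\<bar> + (SUP x. \<bar>\<phi> \<theta> x - \<phi> \<theta>' x\<bar>)"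
  define E where "E = (\<lambda>\<eta>. exp (- P \<eta> * real n + birk (\<phi> \<eta>) n w))"
  have "N > 0"
    using gibbs by (simp add: uniform_gibbs_def)
  have upper: "measure (\<mu> \<theta>) (cyl w n) \<le> N * E \<theta>"
    using gibbs assms(2,4) by (auto simp: uniform_gibbs_def E_def divide_le_eq)
  have lower: "E \<theta>' \<le> N * measure (\<mu> \<theta>') (cyl w n)"
    using gibbs assms(3,4) \<open>N > 0\<close>
    by (auto simp: uniform_gibbs_def E_def divide_le_eq le_divide_eq mult.commute)
  have gibbs_\<theta>: "holder (\<phi> \<theta>)" and gibbs_\<theta>': "holder (\<phi> \<theta>')"
    using gibbs assms(2,3) by (auto simp: uniform_gibbs_def)
  have "birk (\<phi> \<theta>) n w - birk (\<phi> \<theta>') n w = (\<Sum>s<n. \<phi> \<theta> ((shift ^^ s) w) - \<phi> \<theta>' ((shift ^^ s) w))"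
    by (simp add: birk_def sum_subtractf)
  also have "\<dots> \<le> (\<Sum>s<n. SUP x. \<bar>\<phi> \<theta> x - \<phi> \<theta>' x\<bar>)"
    using holder_abs_diff_le_SUP[OF gibbs_\<theta> gibbs_\<theta>'] by (intro sum_mono) (simp add: abs_le_iff)
  finally have "birk (\<phi> \<theta>) n w \<le> birk (\<phi> \<theta>') n w + real n * (SUP x. \<bar>\<phi> \<theta> x - \<phi> \<theta>' x\<bar>)"
    by simp
  moreover have "real n * (P \<theta>' - P \<theta>) \<le> real n * \<bar>P \<theta> - P \<theta>'\<bar>"
    by (intro mult_left_mono) auto
  ultimately have "- P \<theta> * real n + birk (\<phi> \<theta>) n w \<le> (- P \<theta>' * real n + birk (\<phi> \<theta>') n w) + real n * K"
    unfolding K_def by (simp add: algebra_simps)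
  then have "E \<theta> \<le> E \<theta>' * exp (real n * K)"
    unfolding E_def by (simp add: exp_add[symmetric])
  also have "\<dots> \<le> N * measure (\<mu> \<theta>') (cyl w n) * exp (real n * K)"
    using lower by (intro mult_right_mono) auto
  finally have "N * E \<theta> \<le> N * (N * measure (\<mu> \<theta>') (cyl w n) * exp (real n * K))"
    using \<open>N > 0\<close> by simp
  with upper show ?thesis
    by (simp add: K_def power2_eq_square algebra_simps)
qed

lemma loss_assumption_modulus:
  assumes "loss_assumption \<Theta> L \<omega>" "\<theta> \<in> \<Theta>" "\<theta>' \<in> \<Theta>"
  shows "\<bar>L \<theta> x y - L \<theta>' x' y\<bar> \<le> \<omega> (dist \<theta> \<theta>') + \<omega> (dX x x')"
  using assms unfolding loss_assumption_def by blast

lemma loss_assumption_parameter_bound: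
  assumes "loss_assumption \<Theta> L \<omega>" "\<theta> \<in> \<Theta>" "\<theta>' \<in> \<Theta>"
  shows "\<bar>L \<theta> x y - L \<theta>' x y\<bar> \<le> \<omega> (dist \<theta> \<theta>')"
  using loss_assumption_modulus[OF assms, of x y x] assms(1)
  by (simp add: loss_assumption_def dX_def)

definition trunc_seq :: "nat \<Rightarrow> (nat \<Rightarrow> 'a) \<Rightarrow> nat \<Rightarrow> 'a" where
  "trunc_seq m x = (\<lambda>i. if i < m then x i else undefined)"

lemma trunc_seq_cong: "(\<And>i. i < m \<Longrightarrow> x i = x' i) \<Longrightarrow> trunc_seq m x = trunc_seq m x'"
  by (simp add: trunc_seq_def fun_eq_iff)

lemma dX_trunc_seq_le: "dX x (trunc_seq m x) \<le> (1/2) ^ m"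
proof (cases "x = trunc_seq m x")
  case False
  then have "\<exists>k. x k \<noteq> trunc_seq m x k"
    by (auto simp: fun_eq_iff)
  then have "x (first_diff x (trunc_seq m x)) \<noteq> trunc_seq m x (first_diff x (trunc_seq m x))"
    unfolding first_diff_def by (rule LeastI_ex)
  then have "m \<le> first_diff x (trunc_seq m x)"
    by (auto simp: trunc_seq_def split: if_splits)
  then show ?thesis
    using False by (simp add: dX_def power_decreasing)
qed (simp add: dX_def)

lemma loss_assumption_trunc_seq:
  assumes "loss_assumption \<Theta> L \<omega>" "\<epsilon> > 0"
  obtains m where "m > 0" "\<And>\<theta> x y. \<theta> \<in> \<Theta> \<Longrightarrow> \<bar>L \<theta> x y - L \<theta> (trunc_seq m x) y\<bar> \<le> \<epsilon>"
proof -
  have \<omega>0: "\<omega> 0 = 0" and "(\<omega> \<longlongrightarrow> 0) (at_right 0)"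
    using assms(1) unfolding loss_assumption_def by auto
  have modulus: "\<bar>L \<theta> x y - L \<theta> x' y\<bar> \<le> \<omega> (dX x x')" if "\<theta> \<in> \<Theta>" for \<theta> x x' y
    using loss_assumption_modulus[OF assms(1) that that, of x y x'] \<omega>0 by simp
  have "eventually (\<lambda>r. \<omega> r < \<epsilon>) (at_right 0)"
    using \<open>(\<omega> \<longlongrightarrow> 0) (at_right 0)\<close> assms(2) by (intro order_tendstoD(2)) auto
  then obtain \<delta> where "\<delta> > 0" and \<delta>: "\<And>r. 0 < r \<Longrightarrow> r < \<delta> \<Longrightarrow> \<omega> r < \<epsilon>"
    by (auto simp: eventually_at_right_field)
  obtain k :: nat where "(1/2) ^ k < \<delta>"
    using real_arch_pow_inv[OF \<open>\<delta> > 0\<close>, of "1/2"] by auto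
  moreover have "(1/2 :: real) ^ Suc k \<le> (1/2) ^ k"
    by (rule power_decreasing) auto
  ultimately have "(1/2) ^ Suc k < \<delta>"
    by linarith
  have \<omega>_trunc: "\<omega> (dX x (trunc_seq (Suc k) x)) \<le> \<epsilon>" for x
  proof (cases "dX x (trunc_seq (Suc k) x) = 0")
    case False
    then have "0 < dX x (trunc_seq (Suc k) x)"
      by (simp add: dX_def split: if_splits)
    with dX_trunc_seq_le[of x "Suc k"] \<open>(1/2) ^ Suc k < \<delta>\<close> show ?thesis
      by (intro less_imp_le \<delta>) auto
  qed (use \<omega>0 assms(2) in simp)
  have "\<bar>L \<theta> x y - L \<theta> (trunc_seq (Suc k) x) y\<bar> \<le> \<epsilon>" if "\<theta> \<in> \<Theta>" for \<theta> x y
    by (rule order_trans[OF modulus[OF that] \<omega>_trunc])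
  then show thesis
    by (intro that[of "Suc k"]) auto
qed

lemma loss_sum_depends_prefix:
  assumes "\<And>x x' y. (\<forall>i<r. x i = x' i) \<Longrightarrow> L \<theta> x y = L \<theta> x' y"
    and "\<forall>i<t + r. x i = x' i"
  shows "loss_sum L \<Psi> \<theta> t x y = loss_sum L \<Psi> \<theta> t x' y"
  unfolding loss_sum_def
proof (intro sum.cong refl)
  fix s assume "s \<in> {..<t}"
  then have "\<forall>i<r. (shift ^^ s) x i = (shift ^^ s) x' i"
    using assms(2) by (simp add: funpow_shift_apply)
  then show "L \<theta> ((shift ^^ s) x) ((\<Psi> ^^ s) y) = L \<theta> ((shift ^^ s) x') ((\<Psi> ^^ s) y)"
    by (rule assms(1))
qed

lemma loss_sum_trunc_seq_depends_prefix:
  assumes "\<forall>i<t + m. x i = x' i"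
  shows "loss_sum (\<lambda>\<theta> x. L \<theta> (trunc_seq m x)) \<Psi> \<theta> t x y
    = loss_sum (\<lambda>\<theta> x. L \<theta> (trunc_seq m x)) \<Psi> \<theta> t x' y"
proof (rule loss_sum_depends_prefix[OF _ assms])
  show "L \<theta> (trunc_seq m x) y = L \<theta> (trunc_seq m x') y" if "\<forall>i<m. x i = x' i" for x x' y
    using trunc_seq_cong[of m x x'] that by simp
qed

lemma loss_sum_diff_le:
  assumes "\<And>x y. \<bar>L \<theta> x y - L' \<theta>' x y\<bar> \<le> c"
  shows "\<bar>loss_sum L \<Psi> \<theta> t x y - loss_sum L' \<Psi> \<theta>' t x y\<bar> \<le> real t * c"
  unfolding loss_sum_def using assms by (rule abs_sum_diff_le)

lemma integrable_exp_minus_loss_sum: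
  fixes L :: "'c::metric_space \<Rightarrow> (nat \<Rightarrow> 'a::finite) \<Rightarrow> 'b::metric_space \<Rightarrow> real"
  assumes "loss_assumption \<Theta> L \<omega>" "\<theta> \<in> \<Theta>"
    and "finite_measure M" "sets M = sets Xspace"
  shows "integrable M (\<lambda>x. exp (- loss_sum L \<Psi> \<theta> t x y))"
proof -
  obtain r where "\<forall>x x' y. (\<forall>i\<le>r. x i = x' i) \<longrightarrow> L \<theta> x y = L \<theta> x' y"
    using assms(1,2) unfolding loss_assumption_def by blast
  then have "L \<theta> x y = L \<theta> x' y" if "\<forall>i<Suc r. x i = x' i" for x x' y
    using that by (simp add: less_Suc_eq_le)
  then have "loss_sum L \<Psi> \<theta> t x y = loss_sum L \<Psi> \<theta> t x' y" if "\<forall>i<t + Suc r. x i = x' i" for x x'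
    using loss_sum_depends_prefix[where L = L and \<theta> = \<theta>, OF _ that] by blast
  then show ?thesis
    by (intro cylinder_function_integral(1)[OF assms(3,4), where n = "t + Suc r"]) simp
qed

lemma integral_exp_minus_loss_sum_le:
  fixes \<mu> :: "'c::metric_space \<Rightarrow> (nat \<Rightarrow> 'a::finite) measure"
    and L :: "'c \<Rightarrow> (nat \<Rightarrow> 'a) \<Rightarrow> 'b::metric_space \<Rightarrow> real"
  assumes gibbs: "uniform_gibbs \<Theta> \<mu> \<phi> N P" and loss: "loss_assumption \<Theta> L \<omega>"
    and trunc: "\<And>\<theta> x y. \<theta> \<in> \<Theta> \<Longrightarrow> \<bar>L \<theta> x y - L \<theta> (trunc_seq m x) y\<bar> \<le> \<epsilon> / 2"
    and \<theta>: "\<theta> \<in> \<Theta>" and \<theta>': "\<theta>' \<in> \<Theta>" and "t \<ge> 1"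
  shows "(\<integral>x. exp (- loss_sum L \<Psi> \<theta> t x y) \<partial>\<mu> \<theta>)
    \<le> N\<^sup>2 * exp (real t * (\<omega> (dist \<theta> \<theta>') + \<epsilon>)
          + (real t + real m) * (\<bar>P \<theta> - P \<theta>'\<bar> + (SUP x. \<bar>\<phi> \<theta> x - \<phi> \<theta>' x\<bar>)))
      * (\<integral>x. exp (- loss_sum L \<Psi> \<theta>' t x y) \<partial>\<mu> \<theta>')"
proof -
  define Lm where "Lm = (\<lambda>\<eta> x. L \<eta> (trunc_seq m x))"
  define J where "J = (\<lambda>\<eta> K. \<integral>x. exp (- loss_sum K \<Psi> \<eta> t x y) \<partial>\<mu> \<eta>)"
  define e where "e = exp (real t * (\<epsilon> / 2))"
  define C where "C = N\<^sup>2 * exp ((real t + real m) * (\<bar>P \<theta> - P \<theta>'\<bar> + (SUP x. \<bar>\<phi> \<theta> x - \<phi> \<theta>' x\<bar>)))"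
  have "prob_space (\<mu> \<eta>)" and measures_sets: "sets (\<mu> \<eta>) = sets Xspace" if "\<eta> \<in> \<Theta>" for \<eta>
    using gibbs that unfolding uniform_gibbs_def by blast+
  note measures = prob_space.axioms(1)[OF this(1)] measures_sets
  have truncation_error: "\<bar>loss_sum L \<Psi> \<eta> t x y - loss_sum Lm \<Psi> \<eta> t x y\<bar> \<le> real t * (\<epsilon> / 2)"
    if "\<eta> \<in> \<Theta>" for \<eta> x
    using trunc[OF that] by (intro loss_sum_diff_le) (simp add: Lm_def)
  have Lm_integrable: "integrable (\<mu> \<eta>) (\<lambda>x. exp (- loss_sum Lm \<Psi> \<eta> t x y))" if "\<eta> \<in> \<Theta>" for \<eta>
    unfolding Lm_def using loss_sum_trunc_seq_depends_prefix
    by (intro cylinder_function_integral(1)[OF measures[OF that], where n = "t + m"]) simp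
  let ?A = "exp (real t * \<omega> (dist \<theta> \<theta>'))"
  have truncate_\<theta>: "J \<theta> L \<le> e * J \<theta> Lm"
    unfolding J_def e_def using truncation_error[OF \<theta>] Lm_integrable[OF \<theta>]
    by (intro integral_exp_minus_le)
  have compare_cylinders: "J \<theta> Lm \<le> ?A * C * J \<theta>' Lm"
    unfolding J_def
  proof (rule cylinder_function_integral_le[OF measures[OF \<theta>] measures[OF \<theta>'], where n = "t + m"])
    show "exp (- loss_sum Lm \<Psi> \<theta> t x y) \<le> ?A * exp (- loss_sum Lm \<Psi> \<theta>' t x y)" for x
      unfolding Lm_def
      by (intro exp_minus_le_of_abs_diff_le loss_sum_diff_le loss_assumption_parameter_bound[OF loss \<theta> \<theta>'])
    show "measure (\<mu> \<theta>) (cyl w (t + m)) \<le> C * measure (\<mu> \<theta>') (cyl w (t + m))" for w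
      unfolding C_def using uniform_gibbs_cyl_measure_le[OF gibbs \<theta> \<theta>', of "t + m"] \<open>t \<ge> 1\<close> by simp
  qed (simp_all add: Lm_def loss_sum_trunc_seq_depends_prefix)
  have untruncate_\<theta>': "J \<theta>' Lm \<le> e * J \<theta>' L"
    unfolding J_def e_def using truncation_error[OF \<theta>'] integrable_exp_minus_loss_sum[OF loss \<theta>' measures[OF \<theta>']]
    by (intro integral_exp_minus_le) (simp_all add: abs_minus_commute)
  have "J \<theta> L \<le> e * (?A * C * J \<theta>' Lm)"
    using truncate_\<theta> compare_cylinders by (rule order_trans[OF _ mult_left_mono]) (simp add: e_def)
  also have "\<dots> \<le> e * (?A * C * (e * J \<theta>' L))"
    using untruncate_\<theta>' by (intro mult_left_mono) (simp_all add: e_def C_def)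
  also have "\<dots> = (e * ?A * e) * C * J \<theta>' L"
    by (simp only: mult_ac)
  also have "e * ?A * e = exp (real t * (\<omega> (dist \<theta> \<theta>') + \<epsilon>))"
    unfolding e_def by (simp add: exp_add[symmetric] algebra_simps)
  also have "exp (real t * (\<omega> (dist \<theta> \<theta>') + \<epsilon>)) * C * J \<theta>' L
      = N\<^sup>2 * exp (real t * (\<omega> (dist \<theta> \<theta>') + \<epsilon>)
          + (real t + real m) * (\<bar>P \<theta> - P \<theta>'\<bar> + (SUP x. \<bar>\<phi> \<theta> x - \<phi> \<theta>' x\<bar>))) * J \<theta>' L"
    unfolding C_def by (simp add: exp_add mult_ac)
  finally show ?thesis
    unfolding J_def .
qed

theorem lemma6p2:
  fixes \<Theta> :: "('c::metric_space) set"
    and \<mu> :: "'c \<Rightarrow> (nat \<Rightarrow> 'a::finite) measure"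
    and \<phi> :: "'c \<Rightarrow> (nat \<Rightarrow> 'a) \<Rightarrow> real"
    and N :: real and P :: "'c \<Rightarrow> real"
    and L :: "'c \<Rightarrow> (nat \<Rightarrow> 'a) \<Rightarrow> 'b::polish_space \<Rightarrow> real"
    and \<Psi> :: "'b \<Rightarrow> 'b" and \<omega> :: "real \<Rightarrow> real"
  assumes "compact \<Theta>"
    and "\<Psi> \<in> borel_measurable borel"
    and "uniform_gibbs \<Theta> \<mu> \<phi> N P"
    and "loss_assumption \<Theta> L \<omega>"
  shows "\<forall>\<epsilon>>0. \<exists>T>0. \<forall>\<theta>\<in>\<Theta>. \<forall>\<theta>'\<in>\<Theta>. \<forall>y. \<forall>t\<ge>1.
     (\<integral>x. exp (- loss_sum L \<Psi> \<theta> t x y) \<partial>\<mu> \<theta>) / (\<integral>x'. exp (- loss_sum L \<Psi> \<theta>' t x' y) \<partial>\<mu> \<theta>')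
       \<le> N\<^sup>2 * exp (real t * (\<omega> (dist \<theta> \<theta>') + \<epsilon>)
              + (real t + T) * (\<bar>P \<theta> - P \<theta>'\<bar> + (SUP x. \<bar>\<phi> \<theta> x - \<phi> \<theta>' x\<bar>)))"
proof (intro allI impI, goal_cases)
  case (1 \<epsilon>)
  then obtain m where "m > 0"
    and trunc: "\<And>\<theta> x y. \<theta> \<in> \<Theta> \<Longrightarrow> \<bar>L \<theta> x y - L \<theta> (trunc_seq m x) y\<bar> \<le> \<epsilon> / 2"
    using loss_assumption_trunc_seq[OF assms(4), of "\<epsilon> / 2"] by auto
  show ?case
    using \<open>m > 0\<close>
    by (intro exI[of _ "real m"] conjI ballI allI impI divide_le_of_le_mult
        integral_exp_minus_loss_sum_le[OF assms(3,4) trunc] integral_nonneg_AE) auto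
qed

end
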